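(* Let $n\ge 2$. The graph $D_n$ is complete if and only if every prime $p\le \frac n2$ satisfies both $p\mid n$ and $p^{\acute v_p(n)}>\frac n2$.
   Context: $D_n$ is the graph with vertex set $\{1,\dots,n\}$ in which distinct $a,b$ are adjacent iff $\gcd(a,b)\mid n$ (the maximal Diophantine graph of order $n$). For a prime $p$, $\acute v_p(n):=v_p(n)+1$, where $v_p(n)$ is the exponent of $p$ in $n$. *)

theory Defs
  imports Complex_Main "HOL-Computational_Algebra.Primes"
begin

definition diophantine_adj :: "nat \<Rightarrow> nat \<Rightarrow> nat \<Rightarrow> bool" where
  "diophantine_adj n a b \<longleftrightarrow> a \<in> {1..n} \<and> b \<in> {1..n} \<and> a \<noteq> b \<and> gcd a b dvd n"

definition D_complete :: "nat \<Rightarrow> bool" where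
  "D_complete n \<longleftrightarrow> (\<forall>a\<in>{1..n}. \<forall>b\<in>{1..n}. a \<noteq> b \<longrightarrow> diophantine_adj n a b)"

definition vacute :: "nat \<Rightarrow> nat \<Rightarrow> nat" where
  "vacute p n = multiplicity p n + 1"

end

theory Submission
  imports Defs
begin

text \<open>Two distinct vertices of \<open>D\<^sub>n\<close> have a gcd of at most \<open>n/2\<close>, and every \<open>d \<le> n/2\<close>
  arises as such a gcd, namely of \<open>d\<close> and \<open>2d\<close>; so \<open>D\<^sub>n\<close> is complete iff every \<open>d \<le> n/2\<close>
  divides \<open>n\<close>. Comparing exponents prime by prime, this holds iff each prime \<open>p \<le> n/2\<close>
  divides \<open>n\<close> and the first prime power \<open>p\<^bsup>v\<^sub>p(n)+1\<^esup>\<close> not dividing \<open>n\<close> exceeds \<open>n/2\<close>.\<close>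

lemma two_gcd_le_max:
  fixes a b :: nat
  assumes "0 < a" "0 < b" "a \<noteq> b"
  shows "2 * gcd a b \<le> max a b"
proof -
  obtain x y where x: "a = gcd a b * x" and y: "b = gcd a b * y"
    by (meson gcd_dvd1 gcd_dvd2 dvdE)
  with assms have "0 < x" "0 < y" "x \<noteq> y" by (auto intro!: gr0I)
  then have "2 \<le> max x y" by linarith
  then have "gcd a b * 2 \<le> gcd a b * max x y" by simp
  also have "\<dots> = max a b" using x y by (simp add: nat_mult_max_right)
  finally show ?thesis by simp
qed

lemma D_complete_iff_half_divisors:
  "D_complete n \<longleftrightarrow> (\<forall>d::nat. 0 < d \<and> 2 * d \<le> n \<longrightarrow> d dvd n)"
proof
  assume complete: "D_complete n"
  show "\<forall>d. 0 < d \<and> 2 * d \<le> n \<longrightarrow> d dvd n"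
  proof (intro allI impI)
    fix d :: nat
    assume "0 < d \<and> 2 * d \<le> n"
    then have "diophantine_adj n d (2 * d)"
      using complete by (auto simp: D_complete_def)
    then show "d dvd n" by (simp add: diophantine_adj_def)
  qed
next
  assume half_divisors: "\<forall>d. 0 < d \<and> 2 * d \<le> n \<longrightarrow> d dvd n"
  show "D_complete n"
    unfolding D_complete_def diophantine_adj_def
  proof (intro ballI impI conjI)
    fix a b assume ab: "a \<in> {1..n}" "b \<in> {1..n}" "a \<noteq> b"
    then show "a \<in> {1..n}" "b \<in> {1..n}" "a \<noteq> b" by auto
    from ab have "2 * gcd a b \<le> n" using two_gcd_le_max[of a b] by auto
    moreover from ab have "0 < gcd a b" by simp
    ultimately show "gcd a b dvd n" using half_divisors by blast
  qed
qed

lemma half_divisors_iff_prime_powers: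
  fixes n :: nat
  assumes "n \<noteq> 0"
  shows "(\<forall>d. 0 < d \<and> 2 * d \<le> n \<longrightarrow> d dvd n) \<longleftrightarrow>
    (\<forall>p. prime p \<and> 2 * p \<le> n \<longrightarrow> p dvd n \<and> n < 2 * p ^ (multiplicity p n + 1))"
proof
  assume half_divisors: "\<forall>d. 0 < d \<and> 2 * d \<le> n \<longrightarrow> d dvd n"
  show "\<forall>p. prime p \<and> 2 * p \<le> n \<longrightarrow> p dvd n \<and> n < 2 * p ^ (multiplicity p n + 1)"
  proof (intro allI impI conjI)
    fix p :: nat
    assume p: "prime p \<and> 2 * p \<le> n"
    then show "p dvd n" using half_divisors prime_gt_0_nat by blast
    have "\<not> p ^ (multiplicity p n + 1) dvd n"
      using p assms by (subst power_dvd_iff_le_multiplicity) auto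
    then show "n < 2 * p ^ (multiplicity p n + 1)"
      using half_divisors p by (metis not_less prime_gt_0_nat zero_less_power)
  qed
next
  assume prime_powers:
    "\<forall>p. prime p \<and> 2 * p \<le> n \<longrightarrow> p dvd n \<and> n < 2 * p ^ (multiplicity p n + 1)"
  show "\<forall>d. 0 < d \<and> 2 * d \<le> n \<longrightarrow> d dvd n"
  proof (intro allI impI)
    fix d :: nat
    assume d: "0 < d \<and> 2 * d \<le> n"
    show "d dvd n"
    proof (rule multiplicity_le_imp_dvd)
      show "d \<noteq> 0" using d by simp
      fix p :: nat
      assume "prime p"
      define e where "e = multiplicity p d"
      show "e \<le> multiplicity p n"
      proof (cases "e = 0")
        case False
        have "p ^ e \<le> d"
          using d by (intro dvd_imp_le) (simp_all add: e_def multiplicity_dvd)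
        moreover have "p \<le> p ^ e"
          using False \<open>prime p\<close> by (intro self_le_power) (auto dest: prime_gt_0_nat)
        ultimately have "n < 2 * p ^ (multiplicity p n + 1)"
          using d \<open>prime p\<close> prime_powers by auto
        with \<open>p ^ e \<le> d\<close> d have "p ^ e < p ^ (multiplicity p n + 1)" by linarith
        then show ?thesis
          using \<open>prime p\<close>
          by (metis Suc_eq_plus1 less_Suc_eq_le power_less_imp_less_exp prime_gt_1_nat)
      qed simp
    qed
  qed
qed

theorem mainTheorem10:
  fixes n :: nat
  assumes "n \<ge> 2"
  shows "D_complete n \<longleftrightarrow>
    (\<forall>p::nat. prime p \<and> real p \<le> real n / 2 \<longrightarrow>
       p dvd n \<and> real (p ^ vacute p n) > real n / 2)"
proof -
  have half_le: "real k \<le> real n / 2 \<longleftrightarrow> 2 * k \<le> n"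
    and half_less: "real n / 2 < real k \<longleftrightarrow> n < 2 * k" for k by linarith+
  have "D_complete n \<longleftrightarrow>
      (\<forall>p. prime p \<and> 2 * p \<le> n \<longrightarrow> p dvd n \<and> n < 2 * p ^ vacute p n)"
    using assms by (simp only: D_complete_iff_half_divisors half_divisors_iff_prime_powers
        vacute_def not_numeral_le_zero)
  then show ?thesis by (simp only: half_le half_less)
qed

end
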